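(* Let $\pi$ be an $(m,n)$-parking function with priority forest $P$. Then (a) $\mathrm{lucky}(\pi)=\mathrm{sasc}(P)$, and (b) $\mathrm{probes}(\pi)=\mathrm{diff}(P)$.
   Context: $[n]=\{1,\dots,n\}$, $[n]_0=\{0,\dots,n\}$. An $(m,n)$-parking function is a map $\pi:[m]\to[n]$ such that when cars $1,\dots,m$ arrive in order to spots $1,\dots,n$ and car $i$ parks at the first empty spot $\ge\pi(i)$, all cars park. Its bird's eye permutation $\omega$ sends each occupied spot to the car parked there. Its priority forest $P$ is the rooted forest on $[n]_0$ in which each occupied spot $i$ is a non-root vertex with parent $\pi(\omega(i))-1$ and all other vertices are roots (it is a priority forest). A car is lucky if it parks at its preferred spot; $\mathrm{lucky}(\pi)$ is the number of lucky cars. $\mathrm{probes}(\pi)$ is the total number of parking attempts (successful or not) made by all cars. For a priority forest $P$ with shifted parent map $s_P(i)=p(i)+1$ ($p(i)$ the parent of non-root $i$): $\mathrm{sasc}(P)$ is the number of non-root vertices $i$ whose parent is $i-1$, and $\mathrm{diff}(P)=\sum_i(i-s_P(i)+1)$, summed over non-root vertices $i$. *)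

theory Defs
  imports Main
begin

text \<open>Cars are 1..m, spots 1..n; a preference function is
  pi :: nat => nat (only its values on 1..m matter).
  occ pi k = set of spots occupied after cars 1..k have arrived; car k takes
  the first spot j >= pi k not yet occupied (spots beyond n represent failure).\<close>

fun occ :: "(nat \<Rightarrow> nat) \<Rightarrow> nat \<Rightarrow> nat set" where
  "occ \<pi> 0 = {}"
| "occ \<pi> (Suc k) = insert (LEAST j. \<pi> (Suc k) \<le> j \<and> j \<notin> occ \<pi> k) (occ \<pi> k)"

definition spot :: "(nat \<Rightarrow> nat) \<Rightarrow> nat \<Rightarrow> nat" where
  "spot \<pi> k = (LEAST j. \<pi> k \<le> j \<and> j \<notin> occ \<pi> (k - 1))"

definition parking_function :: "nat \<Rightarrow> nat \<Rightarrow> (nat \<Rightarrow> nat) \<Rightarrow> bool" where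
  "parking_function m n \<pi> \<longleftrightarrow>
     (\<forall>i\<in>{1..m}. \<pi> i \<in> {1..n}) \<and> (\<forall>i\<in>{1..m}. spot \<pi> i \<le> n)"

definition birds_eye :: "nat \<Rightarrow> (nat \<Rightarrow> nat) \<Rightarrow> nat \<Rightarrow> nat" where
  "birds_eye m \<pi> s = (THE i. i \<in> {1..m} \<and> spot \<pi> i = s)"

text \<open>Rooted forests on [n]_0 are represented by their parent map:
  P v = Some p if v is a non-root with parent p, and P v = None if v is a root
  (and for v outside [n]_0).\<close>
type_synonym forest = "nat \<Rightarrow> nat option"

definition priority_forest :: "nat \<Rightarrow> nat \<Rightarrow> (nat \<Rightarrow> nat) \<Rightarrow> forest" where
  "priority_forest m n \<pi> v =
     (if v \<in> spot \<pi> ` {1..m} then Some (\<pi> (birds_eye m \<pi> v) - 1) else None)"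

definition lucky :: "nat \<Rightarrow> (nat \<Rightarrow> nat) \<Rightarrow> nat" where
  "lucky m \<pi> = card {i \<in> {1..m}. spot \<pi> i = \<pi> i}"

text \<open>Car i tries spots pi i, pi i + 1, ..., spot pi i: that is spot - pi + 1 attempts.\<close>
definition probes :: "nat \<Rightarrow> (nat \<Rightarrow> nat) \<Rightarrow> nat" where
  "probes m \<pi> = (\<Sum>i\<in>{1..m}. spot \<pi> i - \<pi> i + 1)"

definition nonroots :: "nat \<Rightarrow> forest \<Rightarrow> nat set" where
  "nonroots n P = {i \<in> {0..n}. P i \<noteq> None}"

definition shifted_parent :: "forest \<Rightarrow> nat \<Rightarrow> nat" where
  "shifted_parent P i = the (P i) + 1"

definition sasc :: "nat \<Rightarrow> forest \<Rightarrow> nat" where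
  "sasc n P = card {i \<in> nonroots n P. int (the (P i)) = int i - 1}"

definition pf_diff :: "nat \<Rightarrow> forest \<Rightarrow> int" where
  "pf_diff n P = (\<Sum>i\<in>nonroots n P. int i - int (shifted_parent P i) + 1)"

end

theory Submission
  imports Defs
begin

text \<open>The occupied spots are exactly the nonroots of the priority forest, and the spot
  where car i parks gets the parent \<pi> i - 1. So a nonroot is a strict ascent iff its car
  parked at its preferred spot, and its contribution i - s_P(i) + 1 to diff is exactly
  the number of probes made by that car.\<close>

lemma occ_eq_spot_image: "occ \<pi> k = spot \<pi> ` {1..k}"
proof (induction k)
  case 0
  then show ?case by simp
next
  case (Suc k)
  have "occ \<pi> (Suc k) = insert (spot \<pi> (Suc k)) (occ \<pi> k)"
    by (simp add: spot_def)
  moreover have "{1..Suc k} = insert (Suc k) {1..k}" by auto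
  ultimately show ?case using Suc by simp
qed

lemma spot_ge_and_free: "\<pi> k \<le> spot \<pi> k \<and> spot \<pi> k \<notin> occ \<pi> (k - 1)"
proof -
  have "finite (occ \<pi> (k - 1) \<union> {..<\<pi> k})" by (simp add: occ_eq_spot_image)
  then obtain j where "j \<notin> occ \<pi> (k - 1) \<union> {..<\<pi> k}"
    using ex_new_if_finite[OF infinite_UNIV_nat] by blast
  then have "\<pi> k \<le> j \<and> j \<notin> occ \<pi> (k - 1)" by auto
  then show ?thesis unfolding spot_def by (rule LeastI)
qed

lemma inj_on_spot: "inj_on (spot \<pi>) {1..m}"
proof -
  have "spot \<pi> i \<noteq> spot \<pi> j" if "1 \<le> i" "i < j" for i j
  proof -
    have "spot \<pi> i \<in> occ \<pi> (j - 1)" using that by (auto simp: occ_eq_spot_image)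
    then show ?thesis using spot_ge_and_free[of \<pi> j] by auto
  qed
  then show ?thesis
    unfolding inj_on_def by (metis atLeastAtMost_iff linorder_neqE_nat)
qed

lemma birds_eye_spot: "i \<in> {1..m} \<Longrightarrow> birds_eye m \<pi> (spot \<pi> i) = i"
  unfolding birds_eye_def by (rule the_equality) (auto dest: inj_onD[OF inj_on_spot])

lemma priority_forest_spot:
  "i \<in> {1..m} \<Longrightarrow> priority_forest m n \<pi> (spot \<pi> i) = Some (\<pi> i - 1)"
  by (simp add: priority_forest_def birds_eye_spot)

lemma nonroots_priority_forest:
  assumes "parking_function m n \<pi>"
  shows "nonroots n (priority_forest m n \<pi>) = spot \<pi> ` {1..m}"
  using assms unfolding nonroots_def priority_forest_def parking_function_def by auto

lemma lucky_eq_sasc: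
  assumes "parking_function m n \<pi>"
  shows "lucky m \<pi> = sasc n (priority_forest m n \<pi>)"
proof -
  let ?P = "priority_forest m n \<pi>"
  have ascent_iff_lucky:
    "int (the (?P (spot \<pi> i))) = int (spot \<pi> i) - 1 \<longleftrightarrow> spot \<pi> i = \<pi> i"
    if "i \<in> {1..m}" for i
    using that assms priority_forest_spot[OF that] by (auto simp: parking_function_def)
  have "{v \<in> nonroots n ?P. int (the (?P v)) = int v - 1}
        = spot \<pi> ` {i \<in> {1..m}. spot \<pi> i = \<pi> i}"
    unfolding nonroots_priority_forest[OF assms] using ascent_iff_lucky by blast
  moreover have "inj_on (spot \<pi>) {i \<in> {1..m}. spot \<pi> i = \<pi> i}"
    by (rule inj_on_subset[OF inj_on_spot]) auto
  ultimately show ?thesis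
    unfolding sasc_def lucky_def by (simp only: card_image)
qed

lemma probes_eq_pf_diff:
  assumes "parking_function m n \<pi>"
  shows "int (probes m \<pi>) = pf_diff n (priority_forest m n \<pi>)"
proof -
  let ?P = "priority_forest m n \<pi>"
  have "pf_diff n ?P = (\<Sum>i\<in>{1..m}. int (spot \<pi> i) - int (shifted_parent ?P (spot \<pi> i)) + 1)"
    unfolding pf_diff_def nonroots_priority_forest[OF assms]
    by (simp only: sum.reindex[OF inj_on_spot] o_def)
  also have "\<dots> = (\<Sum>i\<in>{1..m}. int (spot \<pi> i - \<pi> i + 1))"
  proof (rule sum.cong)
    fix i assume i: "i \<in> {1..m}"
    then have "1 \<le> \<pi> i" using assms by (auto simp: parking_function_def)
    then show "int (spot \<pi> i) - int (shifted_parent ?P (spot \<pi> i)) + 1 = int (spot \<pi> i - \<pi> i + 1)"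
      using priority_forest_spot[OF i] spot_ge_and_free[of \<pi> i]
      by (simp add: shifted_parent_def of_nat_diff)
  qed simp
  finally show ?thesis unfolding probes_def by simp
qed

theorem lemma4p4:
  fixes m n :: nat and \<pi> :: "nat \<Rightarrow> nat" and P :: forest
  assumes "parking_function m n \<pi>"
    and "P = priority_forest m n \<pi>"
  shows "lucky m \<pi> = sasc n P \<and> int (probes m \<pi>) = pf_diff n P"
  using lucky_eq_sasc[OF assms(1)] probes_eq_pf_diff[OF assms(1)] assms(2) by simp

end
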